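(* Let $M\in\mathbb{C}^{d\times d}$ be upper Hessenberg, $w\in\mathbb{C}^d$, and ${\mathbf m}_d=\prod_{j=1}^{d-1}M_{j+1,j}$. Assume all eigenvalues $\lambda_1,\dots,\lambda_d$ of $M+we_d^T$ are simple, and let $f$ be analytic on an open set containing the eigenvalues of $M$ and of $M+we_d^T$. Let $\omega(z)=\prod_{i=1}^d(z-\lambda_i)$. Then $$f(M+we_d^T)e_1-f(M)e_1={\mathbf m}_d\sum_{i=1}^d\frac{1}{\omega'(\lambda_i)}f[M,\lambda_i]\,w,$$ and also $$f(M+we_d^T)e_1-f(M)e_1={\mathbf m}_d\,f[M,\lambda_1,\dots,\lambda_d]\,w.$$
   Context: $e_j$ is the $j$th identity column. $f[t,\lambda]=f'(t)$ if $t=\lambda$ and $\frac{f(t)-f(\lambda)}{t-\lambda}$ otherwise. $f[z,\lambda_1,\dots,\lambda_d]$ denotes the divided difference of $f$ of order $d+1$ (on the $d+1$ nodes $z,\lambda_1,\dots,\lambda_d$), extended by continuity/confluence when $z$ coincides with a node. For an analytic function $h$, $h(M)$ is the standard matrix function; in particular $f[M,\lambda_i]$ and $f[M,\lambda_1,\dots,\lambda_d]$ are the matrix functions of $M$ associated with $z\mapsto f[z,\lambda_i]$ and $z\mapsto f[z,\lambda_1,\dots,\lambda_d]$. *)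

theory Defs
  imports "HOL-Complex_Analysis.Complex_Analysis" "Jordan_Normal_Form.Char_Poly"
begin

definition poly_mat :: "complex poly \<Rightarrow> complex mat \<Rightarrow> complex mat" where
  "poly_mat p M = mat (dim_row M) (dim_row M)
     (\<lambda>(i,j). \<Sum>k\<le>degree p. coeff p k * (M ^\<^sub>m k) $$ (i,j))"

text \<open>Standard matrix function h(M) (Hermite interpolation definition, cf. Higham Def. 1.4):
  h(M) = p(M) for any polynomial p interpolating h and its derivatives at each eigenvalue
  up to (algebraic) multiplicity.\<close>
definition mat_fun :: "(complex \<Rightarrow> complex) \<Rightarrow> complex mat \<Rightarrow> complex mat" where
  "mat_fun h M = (SOME A. \<exists>p. (\<forall>l. eigenvalue M l \<longrightarrow>
        (\<forall>j < order l (char_poly M). poly ((pderiv ^^ j) p) l = (deriv ^^ j) h l))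
      \<and> A = poly_mat p M)"

fun divdiff :: "(complex \<Rightarrow> complex) \<Rightarrow> complex list \<Rightarrow> complex" where
  "divdiff f [] = 0"
| "divdiff f [x] = f x"
| "divdiff f (x # y # xs) = (divdiff f (x # xs) - divdiff f (y # xs)) / (x - y)"

definition divdiff_ext :: "(complex \<Rightarrow> complex) \<Rightarrow> complex list \<Rightarrow> complex \<Rightarrow> complex" where
  "divdiff_ext f ls z = (if z \<in> set ls then Lim (at z) (\<lambda>t. divdiff f (t # ls))
                         else divdiff f (z # ls))"

definition divdiff1 :: "(complex \<Rightarrow> complex) \<Rightarrow> complex \<Rightarrow> complex \<Rightarrow> complex" where
  "divdiff1 f l t = (if t = l then deriv f t else (f t - f l) / (t - l))"

definition upper_hessenberg :: "complex mat \<Rightarrow> bool" where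
  "upper_hessenberg M \<longleftrightarrow> (\<forall>i < dim_row M. \<forall>j < dim_col M. j + 1 < i \<longrightarrow> M $$ (i,j) = 0)"

end

theory Submission
  imports Defs "Jordan_Normal_Form.Schur_Decomposition"
begin

text \<open>Let \<omega> be the characteristic polynomial of A = M + w e_d^T, whose roots are the simple
  eigenvalues \<lambda>_i. Interpolating f at the \<lambda>_i gives f = p + g \<omega>, where p is the Lagrange
  interpolant (degree < d) and g = f[\<cdot>, \<lambda>_1, ..., \<lambda>_d] = \<Sum>_i f[\<cdot>, \<lambda>_i] / \<omega>'(\<lambda>_i).
  Hence f(A) = p(A) and f(M) = p(M) + g(M) \<omega>(M). Since M is upper Hessenberg, the Krylov
  vectors A^k e_1 and M^k e_1 coincide for k < d, while A^d e_1 = M^d e_1 + m_d w. So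
  p(A) e_1 = p(M) e_1, and Cayley--Hamilton for A gives 0 = \<omega>(A) e_1 = \<omega>(M) e_1 + m_d w;
  subtracting yields f(A) e_1 - f(M) e_1 = m_d g(M) w. Matrix functions are handled through
  their Hermite-interpolation definition, Cayley--Hamilton again providing well-definedness.\<close>

hide_const (open) Coset.order

section \<open>Polynomials of matrices and the Cayley--Hamilton theorem\<close>

lemma index_mult_mat_sum:
  assumes "A \<in> carrier_mat n n" "B \<in> carrier_mat n n" "i < n" "j < n"
  shows "(A * B) $$ (i,j) = (\<Sum>l<n. A $$ (i,l) * B $$ (l,j))"
  using assms by (auto simp: scalar_prod_def lessThan_atLeast0 intro!: sum.cong)

lemma index_mult_mat_vec_sum:
  assumes "A \<in> carrier_mat n n" "v \<in> carrier_vec n" "i < n"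
  shows "(A *\<^sub>v v) $ i = (\<Sum>l<n. A $$ (i,l) * v $ l)"
  using assms by (auto simp: scalar_prod_def lessThan_atLeast0 intro!: sum.cong)

lemma index_mult_mat_unit_vec:
  fixes A :: "'a :: comm_ring_1 mat"
  assumes "A \<in> carrier_mat n n" "i < n" "j < n"
  shows "(A *\<^sub>v unit_vec n j) $ i = A $$ (i,j)"
  using assms by (simp add: index_mult_mat_vec_sum if_distrib cong: if_cong)

lemma mat_eq_0_if_mult_vec_eq_0:
  fixes A :: "'a :: comm_ring_1 mat"
  assumes A: "A \<in> carrier_mat n n" and zero: "\<And>v. v \<in> carrier_vec n \<Longrightarrow> A *\<^sub>v v = 0\<^sub>v n"
  shows "A = 0\<^sub>m n n"
proof (rule eq_matI)
  fix i j assume "i < dim_row (0\<^sub>m n n :: 'a mat)" "j < dim_col (0\<^sub>m n n :: 'a mat)"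
  then have ij: "i < n" "j < n" by auto
  have "A $$ (i,j) = (A *\<^sub>v unit_vec n j) $ i" using index_mult_mat_unit_vec[OF A ij] by simp
  also have "\<dots> = 0" using zero[of "unit_vec n j"] ij by simp
  finally show "A $$ (i,j) = 0\<^sub>m n n $$ (i,j)" using ij by simp
qed (use A in auto)

lemma pow_mat_Suc_left:
  assumes "A \<in> carrier_mat n n"
  shows "A ^\<^sub>m Suc k = A * A ^\<^sub>m k"
proof (induction k)
  case (Suc k)
  have "A ^\<^sub>m Suc (Suc k) = (A * A ^\<^sub>m k) * A" using Suc by simp
  also have "\<dots> = A * (A ^\<^sub>m k * A)" using assms by (intro assoc_mult_mat[of _ n n _ n _ n]) auto
  finally show ?case by simp
qed (use assms in simp)

lemma pow_mat_Suc_mult_vec: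
  assumes "A \<in> carrier_mat n n" "v \<in> carrier_vec n"
  shows "A ^\<^sub>m Suc k *\<^sub>v v = A *\<^sub>v (A ^\<^sub>m k *\<^sub>v v)"
  unfolding pow_mat_Suc_left[OF assms(1)] using assms by (simp add: assoc_mult_mat_vec[of _ n n _ n])

lemma poly_mat_dim [simp]: "dim_row (poly_mat p M) = dim_row M" "dim_col (poly_mat p M) = dim_row M"
  unfolding poly_mat_def by auto

lemma poly_mat_carrier [simp]: "M \<in> carrier_mat n n \<Longrightarrow> poly_mat p M \<in> carrier_mat n n"
  unfolding poly_mat_def by auto

lemma index_poly_mat:
  assumes "M \<in> carrier_mat n n" "i < n" "j < n" "degree p \<le> N"
  shows "poly_mat p M $$ (i,j) = (\<Sum>k\<le>N. coeff p k * (M ^\<^sub>m k) $$ (i,j))"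
proof -
  have "(\<Sum>k\<le>degree p. coeff p k * (M ^\<^sub>m k) $$ (i,j)) = (\<Sum>k\<le>N. coeff p k * (M ^\<^sub>m k) $$ (i,j))"
    by (rule sum.mono_neutral_left) (use assms in \<open>auto simp: coeff_eq_0\<close>)
  then show ?thesis using assms unfolding poly_mat_def by simp
qed

lemma poly_mat_0: "M \<in> carrier_mat n n \<Longrightarrow> poly_mat 0 M = 0\<^sub>m n n"
  unfolding poly_mat_def by (rule eq_matI) auto

lemma poly_mat_1: "M \<in> carrier_mat n n \<Longrightarrow> poly_mat 1 M = 1\<^sub>m n"
  unfolding poly_mat_def by (rule eq_matI) auto

lemma poly_mat_add:
  assumes M: "M \<in> carrier_mat n n"
  shows "poly_mat (p + q) M = poly_mat p M + poly_mat q M"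
proof (rule eq_matI)
  let ?N = "max (degree p) (degree q)"
  fix i j assume "i < dim_row (poly_mat p M + poly_mat q M)" "j < dim_col (poly_mat p M + poly_mat q M)"
  then have ij: "i < n" "j < n" using M by auto
  have "degree (p + q) \<le> ?N" by (rule degree_add_le) auto
  then show "poly_mat (p + q) M $$ (i, j) = (poly_mat p M + poly_mat q M) $$ (i, j)"
    using ij M by (simp add: index_poly_mat[OF M ij] index_poly_mat[OF M ij, of p ?N]
        index_poly_mat[OF M ij, of q ?N] sum.distrib algebra_simps)
qed (use M in auto)

lemma poly_mat_smult:
  assumes M: "M \<in> carrier_mat n n"
  shows "poly_mat (Polynomial.smult c p) M = c \<cdot>\<^sub>m poly_mat p M"
proof (rule eq_matI)
  fix i j assume "i < dim_row (c \<cdot>\<^sub>m poly_mat p M)" "j < dim_col (c \<cdot>\<^sub>m poly_mat p M)"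
  then have ij: "i < n" "j < n" using M by auto
  show "poly_mat (Polynomial.smult c p) M $$ (i, j) = (c \<cdot>\<^sub>m poly_mat p M) $$ (i, j)"
    using ij M by (simp add: index_poly_mat[OF M ij, of _ "degree p"] sum_distrib_left algebra_simps)
qed (use M in auto)

lemma poly_mat_pCons:
  assumes M: "M \<in> carrier_mat n n"
  shows "poly_mat (pCons a p) M = a \<cdot>\<^sub>m 1\<^sub>m n + M * poly_mat p M"
proof (rule eq_matI)
  fix i j
  assume "i < dim_row (a \<cdot>\<^sub>m 1\<^sub>m n + M * poly_mat p M)"
    and "j < dim_col (a \<cdot>\<^sub>m 1\<^sub>m n + M * poly_mat p M)"
  then have ij: "i < n" "j < n" using M by auto
  let ?N = "degree p"
  have "poly_mat (pCons a p) M $$ (i,j) = (\<Sum>k\<le>Suc ?N. coeff (pCons a p) k * (M ^\<^sub>m k) $$ (i,j))"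
    by (rule index_poly_mat[OF M ij]) (simp add: degree_pCons_le)
  also have "\<dots> = a * 1\<^sub>m n $$ (i,j) + (\<Sum>k\<le>?N. coeff p k * (M ^\<^sub>m Suc k) $$ (i,j))"
    by (subst sum.atMost_Suc_shift) (use M in simp)
  also have "(\<Sum>k\<le>?N. coeff p k * (M ^\<^sub>m Suc k) $$ (i,j))
      = (\<Sum>k\<le>?N. coeff p k * (\<Sum>l<n. M $$ (i,l) * (M ^\<^sub>m k) $$ (l,j)))"
    by (rule sum.cong[OF refl], subst pow_mat_Suc_left[OF M], subst index_mult_mat_sum[OF M _ ij])
      (use M in auto)
  also have "\<dots> = (\<Sum>l<n. M $$ (i,l) * (\<Sum>k\<le>?N. coeff p k * (M ^\<^sub>m k) $$ (l,j)))"
    by (simp add: sum_distrib_left sum_distrib_right algebra_simps sum.swap[of _ "{..?N}"])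
  also have "\<dots> = (M * poly_mat p M) $$ (i,j)"
    by (subst index_mult_mat_sum[OF M _ ij]) (use M index_poly_mat[OF M _ ij(2), of _ p ?N] in auto)
  finally show "poly_mat (pCons a p) M $$ (i, j) = (a \<cdot>\<^sub>m 1\<^sub>m n + M * poly_mat p M) $$ (i, j)"
    using ij M by simp
qed (use M in auto)

lemma poly_mat_mult:
  assumes M: "M \<in> carrier_mat n n"
  shows "poly_mat (p * q) M = poly_mat p M * poly_mat q M"
proof (induction p)
  case 0
  then show ?case using M by (simp add: poly_mat_0)
next
  case (pCons a p)
  define P Q where "P = poly_mat p M" and "Q = poly_mat q M"
  have PQ: "P \<in> carrier_mat n n" "Q \<in> carrier_mat n n" using M unfolding P_def Q_def by auto
  have "poly_mat (pCons a p * q) M = poly_mat (Polynomial.smult a q + pCons 0 (p * q)) M"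
    by simp
  also have "\<dots> = a \<cdot>\<^sub>m Q + (0 \<cdot>\<^sub>m 1\<^sub>m n + M * (P * Q))"
    by (simp add: poly_mat_add[OF M] poly_mat_smult[OF M] poly_mat_pCons[OF M] pCons.IH P_def Q_def)
  also have "0 \<cdot>\<^sub>m 1\<^sub>m n = (0\<^sub>m n n :: complex mat)" by (rule eq_matI) auto
  also have "a \<cdot>\<^sub>m Q + (0\<^sub>m n n + M * (P * Q)) = (a \<cdot>\<^sub>m 1\<^sub>m n + M * P) * Q"
    using M PQ by (simp add: add_mult_distrib_mat[of _ n n] mult_smult_assoc_mat[of _ n n _ n])
  finally show ?case by (simp add: poly_mat_pCons[OF M] P_def Q_def)
qed

lemma poly_mat_similar:
  assumes wit: "similar_mat_wit M T P Q" and M: "M \<in> carrier_mat n n"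
  shows "poly_mat p M = P * poly_mat p T * Q"
proof -
  note w = similar_mat_witD2[OF M wit]
  have T: "T \<in> carrier_mat n n" and PQ: "P \<in> carrier_mat n n" "Q \<in> carrier_mat n n" using w by auto
  show ?thesis
  proof (induction p)
    case 0
    show ?case using M T PQ by (simp add: poly_mat_0)
  next
    case (pCons a p)
    define X where "X = poly_mat p T"
    have X: "X \<in> carrier_mat n n" using T unfolding X_def by simp
    have "poly_mat (pCons a p) M = a \<cdot>\<^sub>m (P * Q) + (P * T * Q) * (P * X * Q)"
      unfolding poly_mat_pCons[OF M] pCons.IH X_def using w(1,3) by simp
    also have "(P * T * Q) * (P * X * Q) = P * (T * X) * Q"
    proof -
      have "(P * T * Q) * (P * X * Q) = P * T * (Q * P) * X * Q"
        using T X PQ by (simp add: assoc_mult_mat[of _ n n _ n _ n])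
      also have "\<dots> = P * (T * X) * Q" using T X PQ w(2) by (simp add: assoc_mult_mat[of _ n n _ n _ n])
      finally show ?thesis .
    qed
    also have "a \<cdot>\<^sub>m (P * Q) + P * (T * X) * Q = P * (a \<cdot>\<^sub>m 1\<^sub>m n + T * X) * Q"
    proof -
      have "P * (a \<cdot>\<^sub>m 1\<^sub>m n + T * X) = P * (a \<cdot>\<^sub>m 1\<^sub>m n) + P * (T * X)"
        by (rule mult_add_distrib_mat[of _ n n]) (use T X PQ in auto)
      also have "P * (a \<cdot>\<^sub>m 1\<^sub>m n) = a \<cdot>\<^sub>m P"
        using PQ by (simp add: mult_smult_distrib[of _ n n _ n])
      finally have "P * (a \<cdot>\<^sub>m 1\<^sub>m n + T * X) * Q = (a \<cdot>\<^sub>m P + P * (T * X)) * Q" by simp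
      also have "\<dots> = (a \<cdot>\<^sub>m P) * Q + P * (T * X) * Q"
        by (rule add_mult_distrib_mat[of _ n n]) (use T X PQ in auto)
      also have "(a \<cdot>\<^sub>m P) * Q = a \<cdot>\<^sub>m (P * Q)"
        using PQ by (simp add: mult_smult_assoc_mat[of _ n n _ n])
      finally show ?thesis by simp
    qed
    finally show ?case by (simp add: poly_mat_pCons[OF T] X_def)
  qed
qed

lemma index_poly_mat_linear:
  assumes "T \<in> carrier_mat n n" "i < n" "j < n"
  shows "poly_mat [:-c, 1:] T $$ (i,j) = T $$ (i,j) - (if i = j then c else 0)"
  using index_poly_mat[OF assms, of "[:-c, 1:]" 1] assms by simp

text \<open>Cayley--Hamilton for upper triangular T: the k-th linear factor T - T(k,k) maps vectors
  supported on the first k + 1 coordinates to vectors supported on the first k.\<close>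

lemma linear_factor_mult_vec_upper_triangular:
  fixes v :: "complex vec"
  assumes T: "T \<in> carrier_mat n n" and ut: "upper_triangular T"
    and v: "v \<in> carrier_vec n" and supp: "\<And>i. k < i \<Longrightarrow> i < n \<Longrightarrow> v $ i = 0"
    and i: "k \<le> i" "i < n"
  shows "(poly_mat [:- T $$ (k,k), 1:] T *\<^sub>v v) $ i = 0"
  unfolding index_mult_mat_vec_sum[OF poly_mat_carrier[OF T] v i(2)]
proof (rule sum.neutral, rule ballI)
  fix j assume j: "j \<in> {..<n}"
  have "T $$ (i,j) = 0" if "j < i" using ut T i that unfolding upper_triangular_def by auto
  then show "poly_mat [:- T $$ (k,k), 1:] T $$ (i,j) * v $ j = 0"
    using supp[of j] i j by (cases "k < j") (auto simp: index_poly_mat_linear[OF T])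
qed

lemma poly_mat_prod_linear_factors_upper_triangular:
  fixes v :: "complex vec"
  assumes T: "T \<in> carrier_mat n n" and ut: "upper_triangular T" and len: "length es = n"
    and diag: "\<And>i. i < n \<Longrightarrow> T $$ (i,i) = es ! i"
    and k: "k \<le> n" and v: "v \<in> carrier_vec n" and supp: "\<And>i. k \<le> i \<Longrightarrow> i < n \<Longrightarrow> v $ i = 0"
  shows "poly_mat (\<Prod>e\<leftarrow>take k es. [:-e, 1:]) T *\<^sub>v v = 0\<^sub>v n"
  using k v supp
proof (induction k arbitrary: v)
  case 0
  then have "v = 0\<^sub>v n" by (intro eq_vecI) auto
  then show ?case using T by (simp add: poly_mat_1)
next
  case (Suc k)
  have k: "k < n" using Suc by simp
  define u where "u = poly_mat [:- T $$ (k,k), 1:] T *\<^sub>v v"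
  have u: "u \<in> carrier_vec n"
    unfolding u_def by (rule mult_mat_vec_carrier[of _ n n]) (use T Suc.prems(2) in auto)
  have u0: "u $ i = 0" if "k \<le> i" "i < n" for i
    unfolding u_def by (rule linear_factor_mult_vec_upper_triangular[OF T ut Suc.prems(2) _ that])
      (use Suc.prems(3) in auto)
  have "poly_mat (\<Prod>e\<leftarrow>take (Suc k) es. [:-e, 1:]) T
      = poly_mat (\<Prod>e\<leftarrow>take k es. [:-e, 1:]) T * poly_mat [:- T $$ (k,k), 1:] T"
    using len k diag[OF k] by (simp add: take_Suc_conv_app_nth poly_mat_mult[OF T, symmetric]
        del: mult_pCons_right mult_pCons_left)
  then have "poly_mat (\<Prod>e\<leftarrow>take (Suc k) es. [:-e, 1:]) T *\<^sub>v v
      = poly_mat (\<Prod>e\<leftarrow>take k es. [:-e, 1:]) T *\<^sub>v u"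
    unfolding u_def using T Suc.prems(2) by (simp add: assoc_mult_mat_vec[of _ n n _ n])
  also have "\<dots> = 0\<^sub>v n" using Suc.IH[OF _ u u0] Suc.prems(1) by simp
  finally show ?case .
qed

theorem cayley_hamilton:
  assumes M: "M \<in> carrier_mat n n"
  shows "poly_mat (char_poly M) M = 0\<^sub>m n n"
proof -
  obtain es where es: "char_poly M = (\<Prod>a\<leftarrow>es. [:- a, 1:])" "length es = n"
    using char_poly_factorized[OF M] by auto
  obtain B P Q where sd: "schur_decomposition M es = (B,P,Q)" by (cases "schur_decomposition M es") auto
  from schur_decomposition[OF M es(1) sd]
  have wit: "similar_mat_wit M B P Q" and ut: "upper_triangular B" and dg: "diag_mat B = es" by auto
  note w = similar_mat_witD2[OF M wit]
  have B: "B \<in> carrier_mat n n" using w by auto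
  have "poly_mat (char_poly M) B = 0\<^sub>m n n"
  proof (rule mat_eq_0_if_mult_vec_eq_0)
    fix v :: "complex vec" assume "v \<in> carrier_vec n"
    have "B $$ (i,i) = es ! i" if "i < n" for i using dg that B unfolding diag_mat_def by auto
    from poly_mat_prod_linear_factors_upper_triangular[OF B ut es(2) this le_refl \<open>v \<in> carrier_vec n\<close>] es
    show "poly_mat (char_poly M) B *\<^sub>v v = 0\<^sub>v n" by simp
  qed (use B in simp)
  then show ?thesis using poly_mat_similar[OF wit M] w by simp
qed

section \<open>Matrix functions via Hermite interpolation\<close>

lemma higher_deriv_poly: "(deriv ^^ j) (poly p) = poly ((pderiv ^^ j) p)"
proof (induction j)
  case (Suc j)
  have "deriv (poly ((pderiv ^^ j) p)) = poly (pderiv ((pderiv ^^ j) p))"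
    by (rule ext, rule DERIV_imp_deriv, rule poly_DERIV)
  then show ?case using Suc by simp
qed simp

lemma higher_pderiv_diff: "(pderiv ^^ j) (p - q) = (pderiv ^^ j) p - (pderiv ^^ j) (q :: 'a :: idom poly)"
  by (induction j) (auto simp: pderiv_diff)

lemma higher_pderiv_linear_power_mult_at_root:
  fixes a :: complex
  assumes "j < k"
  shows "poly ((pderiv ^^ j) ([:-a,1:] ^ k * s)) a = 0"
proof -
  have "poly ((pderiv ^^ j) ([:-a,1:] ^ k * s)) a = (deriv ^^ j) (\<lambda>z. (z - a) ^ k * poly s z) a"
    by (simp add: higher_deriv_poly[symmetric] poly_power poly_mult[abs_def])
  also have "\<dots> = (\<Sum>i = 0..j. of_nat (j choose i) * (deriv ^^ i) (\<lambda>z. (z - a) ^ k) a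
      * (deriv ^^ (j - i)) (poly s) a)"
    by (rule higher_deriv_mult[of _ UNIV]) (auto intro!: holomorphic_intros)
  also have "\<dots> = 0"
    by (rule sum.neutral) (use assms in \<open>auto simp: higher_deriv_power\<close>)
  finally show ?thesis .
qed

lemma higher_pderiv_interpolation_exists:
  fixes l :: complex
  shows "\<exists>r. \<forall>j<m. poly ((pderiv ^^ j) r) l = y j"
proof (induction m)
  case (Suc m)
  then obtain r where r: "\<forall>j<m. poly ((pderiv ^^ j) r) l = y j" by blast
  define c where "c = (y m - poly ((pderiv ^^ m) r) l) / fact m"
  define r' where "r' = r + Polynomial.smult c ([:-l,1:] ^ m)"
  have fact_m: "poly ((pderiv ^^ m) ([:-l,1:] ^ m)) l = fact m"
    unfolding higher_deriv_poly[symmetric]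
    by (simp add: poly_power[abs_def] higher_deriv_power pochhammer_fact)
  have "poly ((pderiv ^^ j) r') l = y j" if "j < Suc m" for j
  proof (cases "j < m")
    case True
    then show ?thesis using r higher_pderiv_linear_power_mult_at_root[OF True, of l 1]
      by (simp add: r'_def higher_pderiv_add higher_pderiv_smult)
  next
    case False
    then have "j = m" using that by simp
    then show ?thesis by (simp add: r'_def higher_pderiv_add higher_pderiv_smult c_def fact_m)
  qed
  then show ?case by blast
qed simp

text \<open>The interpolant is built one node at a time: on top of an interpolant p0 for the nodes in
  E, add Q r, where Q vanishes to the prescribed orders on E and r matches the Taylor data of
  (h - p0) / Q at the new node.\<close>

lemma hermite_interpolation_exists:
  assumes S: "open S" and h: "h holomorphic_on S" and E: "finite E" "E \<subseteq> S"
  shows "\<exists>p. \<forall>l\<in>E. \<forall>j<m l. poly ((pderiv ^^ j) p) l = (deriv ^^ j) h l"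
  using E
proof (induction E rule: finite_induct)
  case (insert l E)
  then obtain p0 where p0: "\<forall>l\<in>E. \<forall>j<m l. poly ((pderiv ^^ j) p0) l = (deriv ^^ j) h l" by auto
  define Q where "Q = (\<Prod>l'\<in>E. [:-l',1:] ^ m l')"
  define S' where "S' = S - E"
  have S': "open S'" unfolding S'_def using S insert(1) by (simp add: open_Diff finite_imp_closed)
  have lS': "l \<in> S'" using insert unfolding S'_def by auto
  have Q_nz: "poly Q z \<noteq> 0" if "z \<in> S'" for z
    using that insert(1) unfolding Q_def S'_def by (auto simp: poly_prod poly_power)
  define g where "g = (\<lambda>z. (h z - poly p0 z) / poly Q z)"
  have hS': "h holomorphic_on S'" using h unfolding S'_def by (rule holomorphic_on_subset) auto
  have g: "g holomorphic_on S'" unfolding g_def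
    by (intro holomorphic_intros hS') (use Q_nz in auto)
  obtain r where r: "\<forall>j<m l. poly ((pderiv ^^ j) r) l = (deriv ^^ j) g l"
    using higher_pderiv_interpolation_exists[where y = "\<lambda>j. (deriv ^^ j) g l"] by blast
  define p where "p = p0 + Q * r"
  have at_l: "poly ((pderiv ^^ j) p) l = (deriv ^^ j) h l" if j: "j < m l" for j
  proof -
    have "poly ((pderiv ^^ j) (Q * r)) l = (deriv ^^ j) (\<lambda>z. poly Q z * poly r z) l"
      by (simp add: higher_deriv_poly[symmetric] poly_mult[abs_def])
    also have "\<dots> = (\<Sum>i = 0..j. of_nat (j choose i) * (deriv ^^ i) (poly Q) l * (deriv ^^ (j-i)) (poly r) l)"
      by (rule higher_deriv_mult[of _ UNIV]) (auto intro!: holomorphic_intros)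
    also have "\<dots> = (\<Sum>i = 0..j. of_nat (j choose i) * (deriv ^^ i) (poly Q) l * (deriv ^^ (j-i)) g l)"
      by (rule sum.cong[OF refl]) (use r j in \<open>auto simp: higher_deriv_poly\<close>)
    also have "\<dots> = (deriv ^^ j) (\<lambda>z. poly Q z * g z) l"
      by (rule higher_deriv_mult[symmetric, OF _ g S' lS']) (auto intro!: holomorphic_intros)
    also have "\<dots> = (deriv ^^ j) (\<lambda>z. h z - poly p0 z) l"
    proof (rule higher_deriv_transform_within_open[OF _ _ S' lS'])
      show "(\<lambda>z. poly Q z * g z) holomorphic_on S'" by (intro holomorphic_intros g)
      show "(\<lambda>z. h z - poly p0 z) holomorphic_on S'" by (intro holomorphic_intros hS')
      show "poly Q z * g z = h z - poly p0 z" if "z \<in> S'" for z using Q_nz[OF that] by (simp add: g_def)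
    qed
    also have "\<dots> = (deriv ^^ j) h l - (deriv ^^ j) (poly p0) l"
      by (rule higher_deriv_diff[OF hS' _ S' lS']) (auto intro!: holomorphic_intros)
    finally show ?thesis unfolding p_def higher_pderiv_add by (simp add: higher_deriv_poly)
  qed
  have at_E: "poly ((pderiv ^^ j) p) l' = (deriv ^^ j) h l'" if l': "l' \<in> E" and j: "j < m l'" for l' j
  proof -
    have "Q = [:-l',1:] ^ m l' * (\<Prod>l''\<in>E - {l'}. [:-l'',1:] ^ m l'')"
      unfolding Q_def using insert(1) l' by (simp add: prod.remove)
    then have "poly ((pderiv ^^ j) (Q * r)) l' = 0"
      using higher_pderiv_linear_power_mult_at_root[OF j] by (simp only: mult.assoc)
    then show ?thesis unfolding p_def higher_pderiv_add using p0 l' j by simp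
  qed
  show ?case using at_l at_E by blast
qed simp

lemma order_ge_if_higher_pderivs_vanish:
  fixes r :: "complex poly"
  assumes "\<And>j. j < m \<Longrightarrow> poly ((pderiv ^^ j) r) l = 0"
  shows "r = 0 \<or> m \<le> order l r"
  using assms
proof (induction m arbitrary: r)
  case (Suc m)
  have r0: "poly r l = 0" using Suc.prems[of 0] by simp
  have "poly ((pderiv ^^ j) (pderiv r)) l = 0" if "j < m" for j
    using Suc.prems[of "Suc j"] that by (simp only: funpow_Suc_right o_def)
  then have "pderiv r = 0 \<or> m \<le> order l (pderiv r)" by (rule Suc.IH)
  then show ?case
  proof
    assume "pderiv r = 0"
    then obtain c where "r = [:c:]" using pderiv_iszero by blast
    then show ?thesis using r0 by simp
  next
    assume "m \<le> order l (pderiv r)"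
    then show ?thesis using order_pderiv[OF _ r0] by (cases "r = 0") auto
  qed
qed simp

lemma order_prod_linear_factors:
  "order a (\<Prod>e\<leftarrow>es. [:-e, 1:]) = count (mset es) (a :: complex)"
proof (induction es)
  case (Cons e es)
  have "(\<Prod>e\<leftarrow>es. [:-e, 1:]) \<noteq> 0" by (auto simp: prod_list_zero_iff)
  then have "[:-e,1:] * (\<Prod>e\<leftarrow>es. [:-e, 1:]) \<noteq> 0" using no_zero_divisors[of "[:-e,1:]"] by fastforce
  from order_mult[OF this, of a]
  have "order a (\<Prod>e\<leftarrow>e # es. [:-e, 1:]) = order a [:-e,1:] + order a (\<Prod>e\<leftarrow>es. [:-e, 1:])"
    by simp
  moreover have "order a [:-e,1:] = (if a = e then 1 else 0)"
    using order_power_n_n[of a 1] order_0I[of "[:-e,1:]" a] by auto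
  ultimately show ?case using Cons by simp
qed (simp add: order_0I)

lemma prod_linear_factors_dvd_if_order_le:
  fixes r :: "complex poly"
  assumes "\<And>a. r = 0 \<or> order a (\<Prod>e\<leftarrow>es. [:-e, 1:]) \<le> order a r"
  shows "(\<Prod>e\<leftarrow>es. [:-e, 1:]) dvd r"
  using assms
proof (induction es arbitrary: r)
  case (Cons a es)
  show ?case
  proof (cases "r = 0")
    case False
    have order_Cons: "order b (\<Prod>e\<leftarrow>a # es. [:-e, 1:])
        = (if b = a then 1 else 0) + order b (\<Prod>e\<leftarrow>es. [:-e, 1:])"
      for b unfolding order_prod_linear_factors by simp
    then have "poly r a = 0" using Cons.prems[of a] False by (simp add: order_root)
    then obtain r' where r': "r = [:-a,1:] * r'" using poly_eq_0_iff_dvd by (metis dvdE)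
    with False have "r' \<noteq> 0" by auto
    then have "order b (\<Prod>e\<leftarrow>es. [:-e, 1:]) \<le> order b r'" for b
      using Cons.prems[of b] False order_Cons[of b] order_mult[of "[:-a,1:]" r' b] r'
        order_power_n_n[of a 1] order_0I[of "[:-a,1:]" b] by (auto split: if_splits)
    then have "(\<Prod>e\<leftarrow>es. [:-e, 1:]) dvd r'" using Cons.IH by blast
    then show ?thesis using r' by (simp del: mult_pCons_left)
  qed simp
qed simp

lemma finite_eigenvalues:
  fixes M :: "complex mat"
  assumes M: "M \<in> carrier_mat n n"
  shows "finite {l. eigenvalue M l}"
proof -
  obtain es where "char_poly M = (\<Prod>a\<leftarrow>es. [:- a, 1:])"
    using char_poly_factorized[OF M] by auto
  then have "char_poly M \<noteq> 0" by (auto simp: prod_list_zero_iff)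
  then show ?thesis using poly_roots_finite eigenvalue_root_char_poly[OF M] by simp
qed

definition hermite_interp :: "complex mat \<Rightarrow> (complex \<Rightarrow> complex) \<Rightarrow> complex poly \<Rightarrow> bool" where
  "hermite_interp M h p \<longleftrightarrow> (\<forall>l. eigenvalue M l \<longrightarrow>
     (\<forall>j < order l (char_poly M). poly ((pderiv ^^ j) p) l = (deriv ^^ j) h l))"

lemma poly_mat_eq_0_if_hermite_interp_0:
  assumes M: "M \<in> carrier_mat n n" and r: "hermite_interp M (\<lambda>_. 0) r"
  shows "poly_mat r M = 0\<^sub>m n n"
proof -
  obtain es where es: "char_poly M = (\<Prod>a\<leftarrow>es. [:- a, 1:])"
    using char_poly_factorized[OF M] by auto
  have "r = 0 \<or> order a (char_poly M) \<le> order a r" for a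
  proof (cases "eigenvalue M a")
    case True
    then show ?thesis
      using r by (intro order_ge_if_higher_pderivs_vanish) (simp add: hermite_interp_def)
  next
    case False
    then have "order a (char_poly M) = 0"
      using eigenvalue_root_char_poly[OF M] by (simp add: order_0I)
    then show ?thesis by simp
  qed
  then have "char_poly M dvd r" unfolding es by (rule prod_linear_factors_dvd_if_order_le)
  then obtain s where "r = char_poly M * s" by (rule dvdE)
  then show ?thesis using M by (simp add: poly_mat_mult[OF M] cayley_hamilton[OF M])
qed

lemma mat_fun_eq_poly_mat:
  assumes M: "M \<in> carrier_mat n n" and p: "hermite_interp M h p"
  shows "mat_fun h M = poly_mat p M"
proof -
  have "\<exists>p'. hermite_interp M h p' \<and> mat_fun h M = poly_mat p' M"
    using someI_ex[of "\<lambda>A. \<exists>p. hermite_interp M h p \<and> A = poly_mat p M"] p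
    unfolding mat_fun_def hermite_interp_def by blast
  then obtain p' where p': "hermite_interp M h p'" and "mat_fun h M = poly_mat p' M" by blast
  moreover have "hermite_interp M (\<lambda>_. 0) (p' - p)"
    using p p' by (simp add: hermite_interp_def higher_pderiv_diff)
  then have "poly_mat (p' - p) M = 0\<^sub>m n n" by (rule poly_mat_eq_0_if_hermite_interp_0[OF M])
  ultimately show ?thesis using poly_mat_add[OF M, of p "p' - p"] M by simp
qed

lemma mat_fun_poly: "M \<in> carrier_mat n n \<Longrightarrow> mat_fun (poly p) M = poly_mat p M"
  by (rule mat_fun_eq_poly_mat) (simp_all add: hermite_interp_def higher_deriv_poly)

context
  fixes M :: "complex mat" and n :: nat and S :: "complex set"
  assumes M: "M \<in> carrier_mat n n" and S: "open S" and spec: "{l. eigenvalue M l} \<subseteq> S"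
begin

lemma hermite_interp_exists:
  assumes "h holomorphic_on S"
  shows "\<exists>p. hermite_interp M h p"
  using hermite_interpolation_exists[OF S assms finite_eigenvalues[OF M] spec,
      of "\<lambda>l. order l (char_poly M)"]
  unfolding hermite_interp_def by auto

lemma mat_fun_add:
  assumes g: "g holomorphic_on S" and h: "h holomorphic_on S"
  shows "mat_fun (\<lambda>z. g z + h z) M = mat_fun g M + mat_fun h M"
proof -
  obtain p q where p: "hermite_interp M g p" and q: "hermite_interp M h q"
    using hermite_interp_exists g h by blast
  have "hermite_interp M (\<lambda>z. g z + h z) (p + q)"
    using p q spec higher_deriv_add[OF g h S]
    by (auto simp: hermite_interp_def higher_pderiv_add)
  then show ?thesis
    using p q by (simp add: mat_fun_eq_poly_mat[OF M] poly_mat_add[OF M])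
qed

lemma mat_fun_cmult:
  assumes h: "h holomorphic_on S"
  shows "mat_fun (\<lambda>z. c * h z) M = c \<cdot>\<^sub>m mat_fun h M"
proof -
  obtain p where p: "hermite_interp M h p" using hermite_interp_exists h by blast
  have "hermite_interp M (\<lambda>z. c * h z) (Polynomial.smult c p)"
    using p spec higher_deriv_cmult[OF h _ S]
    by (auto simp: hermite_interp_def higher_pderiv_smult)
  then show ?thesis
    using p by (simp add: mat_fun_eq_poly_mat[OF M] poly_mat_smult[OF M])
qed

lemma mat_fun_mult_poly:
  assumes h: "h holomorphic_on S"
  shows "mat_fun (\<lambda>z. h z * poly q z) M = mat_fun h M * poly_mat q M"
proof -
  obtain p where p: "hermite_interp M h p" using hermite_interp_exists h by blast
  have "poly ((pderiv ^^ j) (p * q)) l = (deriv ^^ j) (\<lambda>z. h z * poly q z) l"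
    if l: "eigenvalue M l" and j: "j < order l (char_poly M)" for l j
  proof -
    have lS: "l \<in> S" using spec l by auto
    have "poly ((pderiv ^^ j) (p * q)) l = (deriv ^^ j) (\<lambda>z. poly p z * poly q z) l"
      by (simp add: higher_deriv_poly[symmetric] poly_mult[abs_def])
    also have "\<dots> = (\<Sum>i = 0..j. of_nat (j choose i) * (deriv ^^ i) (poly p) l * (deriv ^^ (j - i)) (poly q) l)"
      by (rule higher_deriv_mult[of _ UNIV]) (auto intro!: holomorphic_intros)
    also have "\<dots> = (\<Sum>i = 0..j. of_nat (j choose i) * (deriv ^^ i) h l * (deriv ^^ (j - i)) (poly q) l)"
      using p l j by (intro sum.cong) (auto simp: higher_deriv_poly hermite_interp_def)
    also have "\<dots> = (deriv ^^ j) (\<lambda>z. h z * poly q z) l"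
      by (rule higher_deriv_mult[symmetric, OF h _ S lS]) (auto intro!: holomorphic_intros)
    finally show ?thesis .
  qed
  then have "hermite_interp M (\<lambda>z. h z * poly q z) (p * q)" by (simp add: hermite_interp_def)
  then show ?thesis
    using p by (simp add: mat_fun_eq_poly_mat[OF M] poly_mat_mult[OF M])
qed

lemma mat_fun_cong:
  assumes g: "g holomorphic_on S" and h: "h holomorphic_on S" and eq: "\<And>z. z \<in> S \<Longrightarrow> g z = h z"
  shows "mat_fun g M = mat_fun h M"
proof -
  obtain p where p: "hermite_interp M g p" using hermite_interp_exists g by blast
  have "hermite_interp M h p"
    using p spec higher_deriv_transform_within_open[OF g h S _ eq]
    by (auto simp: hermite_interp_def)
  then show ?thesis using p by (simp add: mat_fun_eq_poly_mat[OF M])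
qed

lemma mat_fun_sum_mult_vec:
  assumes I: "finite I" and h: "\<And>i. i \<in> I \<Longrightarrow> h i holomorphic_on S" and w: "w \<in> carrier_vec n"
  shows "mat_fun (\<lambda>z. \<Sum>i\<in>I. c i * h i z) M *\<^sub>v w
    = finsum_vec TYPE(complex) n (\<lambda>i. c i \<cdot>\<^sub>v (mat_fun (h i) M *\<^sub>v w)) I"
  using I h
proof (induction I rule: finite_induct)
  case empty
  have "0\<^sub>m n n *\<^sub>v w = 0\<^sub>v n" by (rule eq_vecI) (use w in \<open>auto simp: scalar_prod_def\<close>)
  then show ?case using mat_fun_poly[OF M, of 0] M by (simp add: poly_mat_0 poly_0[abs_def] finsum_vec_empty)
next
  case (insert i I)
  have hi: "(\<lambda>z. c i * h i z) holomorphic_on S" and hI: "(\<lambda>z. \<Sum>i\<in>I. c i * h i z) holomorphic_on S"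
    using insert.prems by (auto intro!: holomorphic_intros)
  have mat_fun_carrier: "mat_fun h' M \<in> carrier_mat n n" if "h' holomorphic_on S" for h'
    using hermite_interp_exists[OF that] mat_fun_eq_poly_mat[OF M] M by auto
  have "mat_fun (\<lambda>z. \<Sum>i\<in>insert i I. c i * h i z) M
      = c i \<cdot>\<^sub>m mat_fun (h i) M + mat_fun (\<lambda>z. \<Sum>i\<in>I. c i * h i z) M"
    using insert.hyps mat_fun_add[OF hi hI] mat_fun_cmult insert.prems by simp
  moreover have "(c i \<cdot>\<^sub>m mat_fun (h i) M) *\<^sub>v w = c i \<cdot>\<^sub>v (mat_fun (h i) M *\<^sub>v w)"
    by (rule eq_vecI)
      (use w mat_fun_carrier[of "h i"] insert.prems in \<open>auto simp: scalar_prod_def sum_distrib_left mult.assoc\<close>)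
  moreover have "(\<lambda>i. c i \<cdot>\<^sub>v (mat_fun (h i) M *\<^sub>v w)) \<in> insert i I \<rightarrow> carrier_vec n"
    using insert.prems mat_fun_carrier w by (blast intro: mult_mat_vec_carrier smult_carrier_vec[THEN iffD2])
  ultimately show ?case
    using insert mat_fun_carrier[OF hI] mat_fun_carrier[of "h i"] w
    by (simp add: finsum_vec_insert add_mult_distrib_mat_vec[of _ n n])
qed

end

section \<open>Interpolation at distinct nodes and divided differences\<close>

text \<open>For nodes L = {\<lambda>_1, ..., \<lambda>_d}: node_poly L is \<omega>, node_weight L c is \<omega>'(c)
  (see deriv_poly_node_poly), and node_divdiff f L z is the divided difference
  f[z, \<lambda>_1, ..., \<lambda>_d] in the form \<Sum>_c f[z, c] / \<omega>'(c).\<close>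

definition node_poly :: "complex set \<Rightarrow> complex poly" where
  "node_poly L = (\<Prod>b\<in>L. [:-b, 1:])"

definition node_weight :: "complex set \<Rightarrow> complex \<Rightarrow> complex" where
  "node_weight L c = (\<Prod>b\<in>L - {c}. c - b)"

lemma poly_node_poly: "finite L \<Longrightarrow> poly (node_poly L) z = (\<Prod>b\<in>L. z - b)"
  unfolding node_poly_def by (simp add: poly_prod)

lemma node_poly_remove:
  "finite L \<Longrightarrow> c \<in> L \<Longrightarrow> node_poly L = [:-c, 1:] * node_poly (L - {c})"
  unfolding node_poly_def by (simp add: prod.remove)

lemma poly_node_poly_remove:
  "finite L \<Longrightarrow> c \<in> L \<Longrightarrow> poly (node_poly L) z = (z - c) * poly (node_poly (L - {c})) z"
  by (simp add: node_poly_remove algebra_simps)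

lemma poly_node_poly_remove_self: "finite L \<Longrightarrow> poly (node_poly (L - {c})) c = node_weight L c"
  by (simp add: poly_node_poly node_weight_def)

lemma poly_node_poly_remove_other:
  "finite L \<Longrightarrow> c' \<in> L \<Longrightarrow> c \<noteq> c' \<Longrightarrow> poly (node_poly (L - {c})) c' = 0"
  by (auto simp: poly_node_poly)

lemma node_weight_nonzero: "finite L \<Longrightarrow> node_weight L c \<noteq> 0"
  unfolding node_weight_def by auto

lemma node_weight_insert:
  "finite B \<Longrightarrow> b \<in> B \<Longrightarrow> u \<notin> B \<Longrightarrow> node_weight (insert u B) b = (b - u) * node_weight B b"
  unfolding node_weight_def by (subst insert_Diff_if) auto

lemma node_weight_insert_self: "finite B \<Longrightarrow> u \<notin> B \<Longrightarrow> node_weight (insert u B) u = (\<Prod>b\<in>B. u - b)"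
  unfolding node_weight_def by simp

lemma degree_node_poly: "finite L \<Longrightarrow> degree (node_poly L) = card L"
  unfolding node_poly_def by (subst degree_prod_sum_eq) auto

lemma coeff_node_poly_card: "finite L \<Longrightarrow> coeff (node_poly L) (card L) = 1"
  using degree_node_poly[of L] lead_coeff_prod[of "\<lambda>b. [:-b, 1:]" L] unfolding node_poly_def by simp

lemma deriv_poly_node_poly:
  assumes "finite L" "c \<in> L"
  shows "deriv (poly (node_poly L)) c = node_weight L c"
proof -
  have "deriv (poly (node_poly L)) c = poly (pderiv (node_poly L)) c"
    by (rule DERIV_imp_deriv, rule poly_DERIV)
  also have "\<dots> = node_weight L c"
    unfolding node_poly_remove[OF assms] pderiv_mult
    by (simp add: pderiv_pCons poly_node_poly_remove_self[OF assms(1)])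
  finally show ?thesis .
qed

lemma sum_node_weight_insert:
  assumes "finite B" "u \<notin> B"
  shows "(\<Sum>x\<in>insert u B. f x / node_weight (insert u B) x)
    = f u / (\<Prod>b\<in>B. u - b) + (\<Sum>b\<in>B. f b / ((b - u) * node_weight B b))"
  using assms by (simp add: node_weight_insert node_weight_insert_self cong: sum.cong)

lemma divdiff_eq_sum_node_weight:
  "distinct xs \<Longrightarrow> divdiff f xs = (\<Sum>x\<in>set xs. f x / node_weight (set xs) x)"
proof (induction f xs rule: divdiff.induct)
  case (3 f x y xs)
  define B where "B = set xs"
  have B: "finite B" "x \<noteq> y" "x \<notin> B" "y \<notin> B" using "3.prems" unfolding B_def by auto
  define \<pi> where "\<pi> u = (\<Prod>b\<in>B. u - b)" for u
  define \<rho> where "\<rho> = node_weight B"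
  have \<pi>_nz: "\<pi> u \<noteq> 0" if "u \<notin> B" for u unfolding \<pi>_def using B that by auto
  have \<rho>_nz: "\<rho> b \<noteq> 0" for b unfolding \<rho>_def using B node_weight_nonzero by auto
  have xy: "x - y \<noteq> 0" "y - x \<noteq> 0" using B by auto
  have "divdiff f (x # y # xs)
      = ((f x / \<pi> x + (\<Sum>b\<in>B. f b / ((b - x) * \<rho> b)))
        - (f y / \<pi> y + (\<Sum>b\<in>B. f b / ((b - y) * \<rho> b)))) / (x - y)"
    using "3.IH" "3.prems" sum_node_weight_insert[OF B(1,3)] sum_node_weight_insert[OF B(1,4)]
    unfolding B_def \<pi>_def \<rho>_def by simp
  also have "\<dots> = f x / ((x - y) * \<pi> x) + f y / ((y - x) * \<pi> y)
      + (\<Sum>b\<in>B. f b / ((b - x) * ((b - y) * \<rho> b)))"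
  proof -
    have "f b / ((b - x) * \<rho> b) - f b / ((b - y) * \<rho> b) = (x - y) * (f b / ((b - x) * ((b - y) * \<rho> b)))"
      if "b \<in> B" for b
      using that B \<rho>_nz[of b] by (auto simp: divide_simps; simp add: algebra_simps)
    then have "(\<Sum>b\<in>B. f b / ((b - x) * \<rho> b)) - (\<Sum>b\<in>B. f b / ((b - y) * \<rho> b))
        = (x - y) * (\<Sum>b\<in>B. f b / ((b - x) * ((b - y) * \<rho> b)))"
      by (simp add: sum_subtractf[symmetric] sum_distrib_left)
    moreover have "f x / \<pi> x - f y / \<pi> y = (x - y) * (f x / ((x - y) * \<pi> x) + f y / ((y - x) * \<pi> y))"
      using xy \<pi>_nz[OF B(3)] \<pi>_nz[OF B(4)] by (simp add: divide_simps) (simp add: algebra_simps)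
    ultimately have "(f x / \<pi> x + (\<Sum>b\<in>B. f b / ((b - x) * \<rho> b)))
        - (f y / \<pi> y + (\<Sum>b\<in>B. f b / ((b - y) * \<rho> b)))
        = (x - y) * (f x / ((x - y) * \<pi> x) + f y / ((y - x) * \<pi> y)
          + (\<Sum>b\<in>B. f b / ((b - x) * ((b - y) * \<rho> b))))"
      by (simp add: algebra_simps)
    then show ?thesis using xy by simp
  qed
  also have "\<dots> = (\<Sum>z\<in>insert x (insert y B). f z / node_weight (insert x (insert y B)) z)"
  proof -
    have "node_weight (insert x (insert y B)) x = (x - y) * \<pi> x"
      using B by (simp add: node_weight_insert_self \<pi>_def)
    moreover have "node_weight (insert x (insert y B)) y = (y - x) * \<pi> y"
      using B by (simp add: node_weight_insert node_weight_insert_self \<pi>_def)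
    moreover have "node_weight (insert x (insert y B)) b = (b - x) * ((b - y) * \<rho> b)" if "b \<in> B" for b
      using B that by (simp add: node_weight_insert \<rho>_def)
    ultimately show ?thesis using B by (simp cong: sum.cong)
  qed
  finally show ?case unfolding B_def by simp
qed (simp_all add: node_weight_def)


definition lagrange_poly :: "(complex \<Rightarrow> complex) \<Rightarrow> complex set \<Rightarrow> complex poly" where
  "lagrange_poly f L = (\<Sum>c\<in>L. Polynomial.smult (f c / node_weight L c) (node_poly (L - {c})))"

definition node_divdiff :: "(complex \<Rightarrow> complex) \<Rightarrow> complex set \<Rightarrow> complex \<Rightarrow> complex" where
  "node_divdiff f L z = (\<Sum>c\<in>L. divdiff1 f c z / node_weight L c)"

lemma poly_lagrange_poly:
  "finite L \<Longrightarrow> poly (lagrange_poly f L) z = (\<Sum>c\<in>L. f c / node_weight L c * poly (node_poly (L - {c})) z)"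
  unfolding lagrange_poly_def by (simp add: poly_sum)

lemma degree_lagrange_poly:
  assumes "finite L" "L \<noteq> {}"
  shows "degree (lagrange_poly f L) < card L"
proof -
  have "degree (lagrange_poly f L) \<le> card L - 1"
    unfolding lagrange_poly_def
  proof (rule degree_sum_le[OF assms(1)])
    fix c assume "c \<in> L"
    then show "degree (Polynomial.smult (f c / node_weight L c) (node_poly (L - {c}))) \<le> card L - 1"
      using assms degree_smult_le[of _ "node_poly (L - {c})"] by (simp add: degree_node_poly)
  qed
  moreover have "0 < card L" using assms by (simp add: card_gt_0_iff)
  ultimately show ?thesis by linarith
qed

lemma lagrange_poly_1:
  assumes "finite L" "L \<noteq> {}"
  shows "lagrange_poly (\<lambda>_. 1) L = 1"
proof (rule poly_eqI_degree[of L])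
  fix c assume c: "c \<in> L"
  have "poly (lagrange_poly (\<lambda>_. 1) L) c = poly (node_poly (L - {c})) c / node_weight L c"
    using assms(1) c poly_node_poly_remove_other[OF assms(1) c]
    by (simp add: poly_lagrange_poly sum.remove)
  then show "poly (lagrange_poly (\<lambda>_. 1) L) c = poly 1 c"
    using assms(1) by (simp add: poly_node_poly_remove_self node_weight_nonzero)
qed (use degree_lagrange_poly[OF assms] assms in auto)

lemma divdiff1_mult_linear: "(z - c) * divdiff1 f c z = f z - f c"
  by (simp add: divdiff1_def)

lemma lagrange_poly_remainder:
  assumes L: "finite L" "L \<noteq> {}"
  shows "f z = poly (lagrange_poly f L) z + node_divdiff f L z * poly (node_poly L) z"
proof -
  have "node_divdiff f L z * poly (node_poly L) z
      = (\<Sum>c\<in>L. (f z - f c) * poly (node_poly (L - {c})) z / node_weight L c)"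
    unfolding node_divdiff_def sum_distrib_right
    by (intro sum.cong) (auto simp: poly_node_poly_remove[OF L(1)] divdiff1_mult_linear[symmetric])
  also have "\<dots> = f z * poly (lagrange_poly (\<lambda>_. 1) L) z - poly (lagrange_poly f L) z"
    using L by (simp add: poly_lagrange_poly sum_distrib_left sum_subtractf[symmetric] diff_divide_distrib
        algebra_simps)
  finally show ?thesis using lagrange_poly_1[OF L] by simp
qed

lemma lagrange_poly_at_node:
  assumes "finite L" "c \<in> L"
  shows "poly (lagrange_poly f L) c = f c"
proof -
  have "L \<noteq> {}" using assms by auto
  from lagrange_poly_remainder[OF assms(1) this, of f c]
  show ?thesis using poly_node_poly_remove[OF assms, of c] by simp
qed

lemma divdiff_Cons_eq_node_divdiff:
  assumes ls: "distinct ls" "set ls \<noteq> {}" and t: "t \<notin> set ls"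
  shows "divdiff f (t # ls) = node_divdiff f (set ls) t"
proof -
  let ?L = "set ls"
  have \<omega>_nz: "poly (node_poly ?L) t \<noteq> 0" using t by (simp add: poly_node_poly)
  have P: "poly (lagrange_poly f ?L) t / poly (node_poly ?L) t = (\<Sum>c\<in>?L. f c / ((t - c) * node_weight ?L c))"
    unfolding poly_lagrange_poly[OF finite_set] sum_divide_distrib
  proof (intro sum.cong refl)
    fix c assume c: "c \<in> ?L"
    then have "t - c \<noteq> 0" using t by auto
    then show "f c / node_weight ?L c * poly (node_poly (?L - {c})) t / poly (node_poly ?L) t
        = f c / ((t - c) * node_weight ?L c)"
      using \<omega>_nz node_weight_nonzero[OF finite_set, of ls c]
      by (simp add: poly_node_poly_remove[OF finite_set c] field_simps)
  qed
  have "divdiff f (t # ls) = (\<Sum>x\<in>insert t ?L. f x / node_weight (insert t ?L) x)"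
    using divdiff_eq_sum_node_weight[of "t # ls" f] ls(1) t by (simp only: list.set distinct.simps simp_thms)
  also have "\<dots> = f t / poly (node_poly ?L) t + (\<Sum>c\<in>?L. f c / ((c - t) * node_weight ?L c))"
    by (simp only: sum_node_weight_insert[OF finite_set t] poly_node_poly[OF finite_set])
  also have "(\<Sum>c\<in>?L. f c / ((c - t) * node_weight ?L c)) = - (\<Sum>c\<in>?L. f c / ((t - c) * node_weight ?L c))"
    unfolding sum_negf[symmetric] by (intro sum.cong refl) (metis minus_diff_eq minus_divide_right mult_minus_left)
  finally have "divdiff f (t # ls) = (f t - poly (lagrange_poly f ?L) t) / poly (node_poly ?L) t"
    by (simp add: P diff_divide_distrib)
  also have "f t - poly (lagrange_poly f ?L) t = node_divdiff f ?L t * poly (node_poly ?L) t"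
    using lagrange_poly_remainder[OF finite_set ls(2), of f t] by simp
  finally show ?thesis using \<omega>_nz by simp
qed

lemma divdiff1_holomorphic_on:
  assumes "open S" "f holomorphic_on S"
  shows "divdiff1 f c holomorphic_on S"
proof -
  have "divdiff1 f c = (\<lambda>z. if z = c then deriv f c else (f z - f c) / (z - c))"
    unfolding divdiff1_def by auto
  then show ?thesis using pole_lemma_open[OF assms(2,1)] by simp
qed

lemma node_divdiff_holomorphic_on:
  assumes "open S" "f holomorphic_on S"
  shows "node_divdiff f L holomorphic_on S"
proof -
  have "node_divdiff f L = (\<lambda>z. \<Sum>c\<in>L. divdiff1 f c z * (1 / node_weight L c))"
    by (simp add: node_divdiff_def[abs_def])
  then show ?thesis
    by (simp only:) (intro holomorphic_on_sum holomorphic_on_mult holomorphic_on_const divdiff1_holomorphic_on[OF assms])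
qed

lemma divdiff_ext_eq_node_divdiff:
  assumes S: "open S" and f: "f holomorphic_on S"
    and ls: "distinct ls" "set ls \<noteq> {}" "set ls \<subseteq> S"
  shows "divdiff_ext f ls = node_divdiff f (set ls)"
proof
  fix z
  let ?L = "set ls"
  show "divdiff_ext f ls z = node_divdiff f ?L z"
  proof (cases "z \<in> ?L")
    case False
    then show ?thesis unfolding divdiff_ext_def using divdiff_Cons_eq_node_divdiff[OF ls(1,2)] by simp
  next
    case True
    have "isCont (node_divdiff f ?L) z"
      using node_divdiff_holomorphic_on[OF S f] True ls(3) S
      by (meson holomorphic_on_imp_continuous_on continuous_on_eq_continuous_at subsetD)
    moreover have "eventually (\<lambda>t. t \<in> - (?L - {z}) - {z}) (at z)"
      by (rule eventually_at_in_open, rule open_Compl, rule finite_imp_closed) auto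
    then have "eventually (\<lambda>t. divdiff f (t # ls) = node_divdiff f ?L t) (at z)"
      by eventually_elim (auto intro!: divdiff_Cons_eq_node_divdiff[OF ls(1,2)])
    ultimately have "((\<lambda>t. divdiff f (t # ls)) \<longlongrightarrow> node_divdiff f ?L z) (at z)"
      by (simp add: isCont_def tendsto_cong)
    then show ?thesis unfolding divdiff_ext_def using True by (simp add: tendsto_Lim)
  qed
qed

section \<open>Hessenberg matrices updated in the last column\<close>

lemma char_poly_eq_node_poly_if_simple:
  fixes A :: "complex mat"
  assumes A: "A \<in> carrier_mat n n" and simple: "\<forall>l. eigenvalue A l \<longrightarrow> order l (char_poly A) = 1"
  shows "char_poly A = node_poly {l. eigenvalue A l}"
proof -
  obtain es where es: "char_poly A = (\<Prod>a\<leftarrow>es. [:- a, 1:])"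
    using char_poly_factorized[OF A] by auto
  have set_es: "set es = {l. eigenvalue A l}"
    using eigenvalue_root_char_poly[OF A] es
    by (auto simp: poly_prod_list prod_list_zero_iff o_def image_iff)
  have "count (mset es) a = (if a \<in> set es then 1 else 0)" for a
  proof (cases "a \<in> set es")
    case True
    then show ?thesis using simple es set_es order_prod_linear_factors[of a es] by auto
  qed (simp add: not_in_iff[symmetric])
  then have "distinct es" unfolding distinct_count_atmost_1 by blast
  then show ?thesis
    unfolding es node_poly_def set_es[symmetric] by (simp add: prod.distinct_set_conv_list)
qed

lemma card_eigenvalues_if_simple:
  fixes A :: "complex mat"
  assumes A: "A \<in> carrier_mat n n" and simple: "\<forall>l. eigenvalue A l \<longrightarrow> order l (char_poly A) = 1"
  shows "card {l. eigenvalue A l} = n"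
  using char_poly_eq_node_poly_if_simple[OF assms] degree_monic_char_poly[OF A]
    degree_node_poly[OF finite_eigenvalues[OF A]] by simp

lemma mat_fun_eq_lagrange_poly_if_simple:
  fixes A :: "complex mat"
  assumes A: "A \<in> carrier_mat n n" and simple: "\<forall>l. eigenvalue A l \<longrightarrow> order l (char_poly A) = 1"
  shows "mat_fun f A = poly_mat (lagrange_poly f {l. eigenvalue A l}) A"
  using simple lagrange_poly_at_node[OF finite_eigenvalues[OF A]]
  by (intro mat_fun_eq_poly_mat[OF A]) (simp add: hermite_interp_def)

lemma hessenberg_pow_mult_unit_vec:
  fixes M :: "complex mat"
  assumes M: "M \<in> carrier_mat d d" and H: "upper_hessenberg M" and k: "k < d"
  shows "(\<forall>i. k < i \<and> i < d \<longrightarrow> (M ^\<^sub>m k *\<^sub>v unit_vec d 0) $ i = 0)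
    \<and> (M ^\<^sub>m k *\<^sub>v unit_vec d 0) $ k = (\<Prod>j<k. M $$ (j + 1, j))"
  using k
proof (induction k)
  case (Suc k)
  define v where "v = M ^\<^sub>m k *\<^sub>v unit_vec d 0"
  have v: "v \<in> carrier_vec d" unfolding v_def by (rule mult_mat_vec_carrier[of _ d d]) (use M in auto)
  from Suc have IH: "\<And>i. k < i \<Longrightarrow> i < d \<Longrightarrow> v $ i = 0" "v $ k = (\<Prod>j<k. M $$ (j + 1, j))"
    unfolding v_def by auto
  have M0: "M $$ (i,l) = 0" if "l + 1 < i" "i < d" "l < d" for i l
    using H M that unfolding upper_hessenberg_def by auto
  have vanish: "M $$ (i, l) * v $ l = 0" if "Suc k \<le> i" "i < d" "l < d" "l \<noteq> k \<or> i \<noteq> Suc k" for i l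
    using M0[of l i] IH(1)[of l] that by (cases "l \<le> k") auto
  have Mv: "(M *\<^sub>v v) $ i = M $$ (i, k) * v $ k" if i: "Suc k \<le> i" "i < d" for i
  proof -
    have "(M *\<^sub>v v) $ i = M $$ (i, k) * v $ k + (\<Sum>l\<in>{..<d} - {k}. M $$ (i, l) * v $ l)"
      unfolding index_mult_mat_vec_sum[OF M v i(2)] using i by (subst sum.remove[of _ k]) auto
    also have "(\<Sum>l\<in>{..<d} - {k}. M $$ (i, l) * v $ l) = 0"
      using vanish[OF i] by (intro sum.neutral) auto
    finally show ?thesis by simp
  qed
  have "M ^\<^sub>m Suc k *\<^sub>v unit_vec d 0 = M *\<^sub>v v"
    unfolding v_def by (rule pow_mat_Suc_mult_vec[OF M]) simp
  then show ?case
    using IH(2) Mv vanish[of _ k] Suc.prems by (auto simp: mult.commute)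
qed (use M in auto)

context
  fixes M A :: "complex mat" and w :: "complex vec" and d :: nat
  assumes M: "M \<in> carrier_mat d d" and H: "upper_hessenberg M" and w: "w \<in> carrier_vec d"
    and A: "A = M + mat d d (\<lambda>(i,j). if j = d - 1 then w $ i else 0)" and d: "0 < d"
begin

lemma last_col_update_carrier: "A \<in> carrier_mat d d"
  using A M by auto

lemma last_col_update_mult_vec:
  assumes v: "v \<in> carrier_vec d"
  shows "A *\<^sub>v v = M *\<^sub>v v + (v $ (d - 1)) \<cdot>\<^sub>v w"
proof (rule eq_vecI)
  fix i assume "i < dim_vec (M *\<^sub>v v + (v $ (d - 1)) \<cdot>\<^sub>v w)"
  then have i: "i < d" using w by simp
  have "(\<Sum>l<d. (if l = d - 1 then w $ i else 0) * v $ l) = (\<Sum>l<d. if l = d - 1 then w $ i * v $ (d - 1) else 0)"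
    by (rule sum.cong) auto
  also have "\<dots> = w $ i * v $ (d - 1)" using d by simp
  finally have "(\<Sum>l<d. (if l = d - 1 then w $ i else 0) * v $ l) = w $ i * v $ (d - 1)" .
  moreover have "(A *\<^sub>v v) $ i = (\<Sum>l<d. M $$ (i,l) * v $ l) + (\<Sum>l<d. (if l = d - 1 then w $ i else 0) * v $ l)"
    unfolding index_mult_mat_vec_sum[OF last_col_update_carrier v i] using A M i
    by (simp add: sum.distrib algebra_simps)
  ultimately show "(A *\<^sub>v v) $ i = (M *\<^sub>v v + (v $ (d - 1)) \<cdot>\<^sub>v w) $ i"
    using i M w v by (simp add: index_mult_mat_vec_sum[OF M v i] mult.commute)
qed (use A M w in auto)

lemma last_col_update_pow_mult_unit_vec:
  "k < d \<Longrightarrow> A ^\<^sub>m k *\<^sub>v unit_vec d 0 = M ^\<^sub>m k *\<^sub>v unit_vec d 0"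
proof (induction k)
  case (Suc k)
  define v where "v = M ^\<^sub>m k *\<^sub>v unit_vec d 0"
  have v: "v \<in> carrier_vec d" unfolding v_def by (rule mult_mat_vec_carrier[of _ d d]) (use M in auto)
  have "v $ (d - 1) = 0" using hessenberg_pow_mult_unit_vec[OF M H, of k] Suc.prems unfolding v_def by auto
  moreover have "M *\<^sub>v v + 0 \<cdot>\<^sub>v w = M *\<^sub>v v" by (rule eq_vecI) (use M v w in auto)
  ultimately have "A *\<^sub>v v = M *\<^sub>v v" by (simp add: last_col_update_mult_vec[OF v])
  then show ?case
    using Suc unfolding v_def
    by (simp only: pow_mat_Suc_mult_vec[OF last_col_update_carrier unit_vec_carrier]
        pow_mat_Suc_mult_vec[OF M unit_vec_carrier] Suc_lessD)
qed (use A M in simp)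

lemma last_col_update_pow_dim_mult_unit_vec:
  "A ^\<^sub>m d *\<^sub>v unit_vec d 0 = M ^\<^sub>m d *\<^sub>v unit_vec d 0 + (\<Prod>j<d - 1. M $$ (j + 1, j)) \<cdot>\<^sub>v w"
proof -
  define v where "v = M ^\<^sub>m (d - 1) *\<^sub>v unit_vec d 0"
  have v: "v \<in> carrier_vec d" unfolding v_def by (rule mult_mat_vec_carrier[of _ d d]) (use M in auto)
  have "A ^\<^sub>m d *\<^sub>v unit_vec d 0 = A *\<^sub>v v"
    using last_col_update_pow_mult_unit_vec[of "d - 1"] d
      pow_mat_Suc_mult_vec[OF last_col_update_carrier, of "unit_vec d 0" "d - 1"]
    by (simp add: v_def)
  also have "\<dots> = M *\<^sub>v v + (v $ (d - 1)) \<cdot>\<^sub>v w" by (rule last_col_update_mult_vec[OF v])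
  also have "v $ (d - 1) = (\<Prod>j<d - 1. M $$ (j + 1, j))"
    using hessenberg_pow_mult_unit_vec[OF M H, of "d - 1"] d unfolding v_def by auto
  also have "M *\<^sub>v v = M ^\<^sub>m d *\<^sub>v unit_vec d 0"
    using pow_mat_Suc_mult_vec[OF M, of "unit_vec d 0" "d - 1"] d by (simp add: v_def)
  finally show ?thesis .
qed

lemma poly_mat_last_col_update_mult_unit_vec:
  assumes deg: "degree p \<le> d"
  shows "poly_mat p A *\<^sub>v unit_vec d 0
    = poly_mat p M *\<^sub>v unit_vec d 0 + (coeff p d * (\<Prod>j<d - 1. M $$ (j + 1, j))) \<cdot>\<^sub>v w"
proof (rule eq_vecI)
  let ?md = "\<Prod>j<d - 1. M $$ (j + 1, j)" and ?e = "unit_vec d 0 :: complex vec"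
  fix i assume "i < dim_vec (poly_mat p M *\<^sub>v ?e + (coeff p d * ?md) \<cdot>\<^sub>v w)"
  then have i: "i < d" using w by simp
  have poly_mat_e: "(poly_mat p X *\<^sub>v ?e) $ i = (\<Sum>k\<le>d. coeff p k * (X ^\<^sub>m k *\<^sub>v ?e) $ i)"
    if "X \<in> carrier_mat d d" for X
    using that i d deg by (simp add: index_mult_mat_unit_vec index_poly_mat)
  have "(poly_mat p A *\<^sub>v ?e) $ i = (\<Sum>k<d. coeff p k * (M ^\<^sub>m k *\<^sub>v ?e) $ i)
      + coeff p d * ((M ^\<^sub>m d *\<^sub>v ?e) $ i + ?md * w $ i)"
    using i M w last_col_update_pow_mult_unit_vec
    by (simp add: poly_mat_e[OF last_col_update_carrier] lessThan_Suc_atMost[symmetric]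
        last_col_update_pow_dim_mult_unit_vec)
  also have "\<dots> = (poly_mat p M *\<^sub>v ?e) $ i + coeff p d * ?md * w $ i"
    by (simp add: poly_mat_e[OF M] lessThan_Suc_atMost[symmetric] algebra_simps)
  finally show "(poly_mat p A *\<^sub>v ?e) $ i = (poly_mat p M *\<^sub>v ?e + (coeff p d * ?md) \<cdot>\<^sub>v w) $ i"
    using i M w by simp
qed (use A M w in auto)

lemma poly_mat_char_poly_last_col_update_mult_unit_vec:
  "poly_mat (char_poly A) M *\<^sub>v unit_vec d 0 = (- (\<Prod>j<d - 1. M $$ (j + 1, j))) \<cdot>\<^sub>v w"
proof (rule eq_vecI)
  let ?md = "\<Prod>j<d - 1. M $$ (j + 1, j)" and ?e = "unit_vec d 0 :: complex vec"
  have sum_0: "poly_mat (char_poly A) M *\<^sub>v ?e + ?md \<cdot>\<^sub>v w = 0\<^sub>m d d *\<^sub>v ?e"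
    using poly_mat_last_col_update_mult_unit_vec[of "char_poly A"]
      cayley_hamilton[OF last_col_update_carrier] degree_monic_char_poly[OF last_col_update_carrier]
    by simp
  fix i assume "i < dim_vec ((- ?md) \<cdot>\<^sub>v w)"
  with arg_cong[OF sum_0, of "\<lambda>v :: complex vec. v $ i"]
  show "(poly_mat (char_poly A) M *\<^sub>v ?e) $ i = ((- ?md) \<cdot>\<^sub>v w) $ i"
    using M w by (simp add: scalar_prod_def eq_neg_iff_add_eq_0)
qed (use M w in simp)

lemma mat_fun_last_col_update_mult_unit_vec:
  assumes simple: "\<forall>l. eigenvalue A l \<longrightarrow> order l (char_poly A) = 1"
    and S: "open S" and f: "f holomorphic_on S" and spec: "{l. eigenvalue M l} \<subseteq> S"
  shows "mat_fun f A *\<^sub>v unit_vec d 0 - mat_fun f M *\<^sub>v unit_vec d 0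
    = (\<Prod>j<d - 1. M $$ (j + 1, j)) \<cdot>\<^sub>v (mat_fun (node_divdiff f {l. eigenvalue A l}) M *\<^sub>v w)"
proof -
  note A' = last_col_update_carrier
  define L where "L = {l. eigenvalue A l}"
  define P where "P = lagrange_poly f L"
  define md where "md = (\<Prod>j<d - 1. M $$ (j + 1, j))"
  define e :: "complex vec" where "e = unit_vec d 0"
  define X Y Z where "X = poly_mat P M" and "Y = poly_mat (node_poly L) M"
    and "Z = mat_fun (node_divdiff f L) M"
  have L: "finite L" "card L = d"
    using finite_eigenvalues[OF A'] card_eigenvalues_if_simple[OF A' simple] unfolding L_def by auto
  then have L_ne: "L \<noteq> {}" using d by auto
  obtain q where q: "hermite_interp M (node_divdiff f L) q"
    using hermite_interp_exists[OF M S spec node_divdiff_holomorphic_on[OF S f]] by blast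
  have XYZ: "X \<in> carrier_mat d d" "Y \<in> carrier_mat d d" "Z \<in> carrier_mat d d"
    using mat_fun_eq_poly_mat[OF M q] M unfolding X_def Y_def Z_def by auto
  have "mat_fun f M = mat_fun (\<lambda>z. poly P z + node_divdiff f L z * poly (node_poly L) z) M"
    using lagrange_poly_remainder[OF L(1) L_ne] unfolding P_def
    by (intro mat_fun_cong[OF M S spec f]) (auto intro!: holomorphic_intros node_divdiff_holomorphic_on[OF S f] f)
  also have "\<dots> = X + Z * Y"
    unfolding X_def Y_def Z_def
    by (simp add: mat_fun_add[OF M S spec] mat_fun_mult_poly[OF M S spec] mat_fun_poly[OF M]
        holomorphic_intros node_divdiff_holomorphic_on[OF S f])
  finally have fM: "mat_fun f M *\<^sub>v e = X *\<^sub>v e + Z *\<^sub>v (Y *\<^sub>v e)"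
    using XYZ unfolding e_def by (simp add: add_mult_distrib_mat_vec[of _ d d] assoc_mult_mat_vec[of _ d d _ d])
  have degP: "degree P < d" using degree_lagrange_poly[OF L(1) L_ne] L(2) unfolding P_def by simp
  have "mat_fun f A = poly_mat P A"
    using mat_fun_eq_lagrange_poly_if_simple[OF A' simple] unfolding P_def L_def by simp
  then have fA: "mat_fun f A *\<^sub>v e = X *\<^sub>v e + 0 \<cdot>\<^sub>v w"
    using poly_mat_last_col_update_mult_unit_vec[of P] degP coeff_eq_0[OF degP]
    unfolding X_def e_def by simp
  have Ye: "Y *\<^sub>v e = (- md) \<cdot>\<^sub>v w"
    using poly_mat_char_poly_last_col_update_mult_unit_vec char_poly_eq_node_poly_if_simple[OF A' simple]
    unfolding Y_def L_def md_def e_def by simp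
  show ?thesis
    unfolding md_def[symmetric] e_def[symmetric] L_def[symmetric] Z_def[symmetric] fA fM Ye
    using XYZ w by (intro eq_vecI) (auto simp: mult_mat_vec[of _ d d])
qed

end

lemma node_divdiff_eq_sum_nth:
  assumes "distinct ls"
  shows "node_divdiff f (set ls)
    = (\<lambda>z. \<Sum>i<length ls. 1 / deriv (poly (node_poly (set ls))) (ls ! i) * divdiff1 f (ls ! i) z)"
proof
  fix z
  have "node_divdiff f (set ls) z = (\<Sum>i<length ls. divdiff1 f (ls ! i) z / node_weight (set ls) (ls ! i))"
    unfolding node_divdiff_def by (rule sum.reindex_bij_betw[OF bij_betw_nth, symmetric]) (use assms in auto)
  then show "node_divdiff f (set ls) z
      = (\<Sum>i<length ls. 1 / deriv (poly (node_poly (set ls))) (ls ! i) * divdiff1 f (ls ! i) z)"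
    by (simp add: deriv_poly_node_poly)
qed

theorem theorem2:
  fixes M :: "complex mat" and w :: "complex vec" and d :: nat
    and f :: "complex \<Rightarrow> complex" and S :: "complex set" and ls :: "complex list"
    and A :: "complex mat" and md :: complex and \<omega> :: "complex \<Rightarrow> complex"
  assumes "0 < d"
    and "M \<in> carrier_mat d d" and "upper_hessenberg M"
    and "w \<in> carrier_vec d"
    and "A = M + mat d d (\<lambda>(i,j). if j = d - 1 then w $ i else 0)"
    and "\<forall>l. eigenvalue A l \<longrightarrow> order l (char_poly A) = 1"
    and "distinct ls" and "set ls = {l. eigenvalue A l}"
    and "open S" and "f holomorphic_on S"
    and "{l. eigenvalue M l} \<subseteq> S" and "{l. eigenvalue A l} \<subseteq> S"
    and "md = (\<Prod>j<d - 1. M $$ (j + 1, j))"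
    and "\<omega> = (\<lambda>z. \<Prod>i<length ls. z - ls ! i)"
  shows "(mat_fun f A *\<^sub>v unit_vec d 0 - mat_fun f M *\<^sub>v unit_vec d 0
           = md \<cdot>\<^sub>v (finsum_vec TYPE(complex) d
               (\<lambda>i. (1 / deriv \<omega> (ls ! i)) \<cdot>\<^sub>v (mat_fun (divdiff1 f (ls ! i)) M *\<^sub>v w))
               {..<length ls}))
      \<and> (mat_fun f A *\<^sub>v unit_vec d 0 - mat_fun f M *\<^sub>v unit_vec d 0
           = md \<cdot>\<^sub>v (mat_fun (divdiff_ext f ls) M *\<^sub>v w))"
proof -
  note d = assms(1) and M = assms(2) and H = assms(3) and w = assms(4) and A = assms(5)
    and simple = assms(6) and ls = assms(7,8) and S = assms(9) and f = assms(10) and spec = assms(11,12)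
  have A': "A \<in> carrier_mat d d" using A M by auto
  have ls_ne: "set ls \<noteq> {}" using card_eigenvalues_if_simple[OF A' simple] d ls(2) by auto
  have \<omega>: "\<omega> = poly (node_poly (set ls))"
    using ls(1) by (auto simp: assms(14) poly_node_poly prod.reindex_bij_betw[OF bij_betw_nth])
  have "mat_fun f A *\<^sub>v unit_vec d 0 - mat_fun f M *\<^sub>v unit_vec d 0
      = md \<cdot>\<^sub>v (mat_fun (node_divdiff f (set ls)) M *\<^sub>v w)"
    using mat_fun_last_col_update_mult_unit_vec[OF M H w A d simple S f spec(1)] ls(2) assms(13) by simp
  moreover have "node_divdiff f (set ls) = divdiff_ext f ls"
    using divdiff_ext_eq_node_divdiff[OF S f ls(1) ls_ne] spec(2) ls(2) by simp
  moreover have "mat_fun (node_divdiff f (set ls)) M *\<^sub>v w = finsum_vec TYPE(complex) d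
      (\<lambda>i. (1 / deriv \<omega> (ls ! i)) \<cdot>\<^sub>v (mat_fun (divdiff1 f (ls ! i)) M *\<^sub>v w)) {..<length ls}"
    unfolding node_divdiff_eq_sum_nth[OF ls(1)] \<omega>
    by (rule mat_fun_sum_mult_vec[OF M S spec(1) _ divdiff1_holomorphic_on[OF S f] w]) simp
  ultimately show ?thesis by simp
qed

end
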